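(* For every finite simple graph $G$, $$\alpha_{\mathcal S}(G)=\inf_A\min\big\{W_A(x)\ \big|\ \lambda_{\min}(A)^{-1}\le x\le\lambda_{\max}(A)^{-1}\big\},$$ the infimum taken over all real symmetric weighted adjacency matrices $A$ of $G$.
   Context: $G$ has vertex set $\{1,\dots,n\}$. A weighted adjacency matrix is a real symmetric $A$ with $A_{ii}=0$ and $A_{ij}=0$ for non-adjacent $i\ne j$. $\mathcal S_n=\{\boldsymbol v\in\mathbb R^n:\langle\boldsymbol 1,\boldsymbol v\rangle=|\boldsymbol v|^2\}$ ($\boldsymbol 1$ the all-ones vector), and $\alpha_{\mathcal S}(G)=\inf_A\sup\{|\boldsymbol v|^2:\boldsymbol v\in\mathcal S_n,\ \langle\boldsymbol v,A\boldsymbol v\rangle=0\}$. For $A=\sum_{\lambda\in\sigma(A)}\lambda P_\lambda$, $W_A(x)=\sum_{\lambda\in\sigma(A)}\frac{\langle\boldsymbol 1,P_\lambda\boldsymbol 1\rangle}{1-\lambda x}$, terms with $\langle\boldsymbol 1,P_\lambda\boldsymbol 1\rangle=0$ omitted, and value $+\infty$ at a pole. $\lambda_{\min}(A),\lambda_{\max}(A)$ are the extreme eigenvalues; for $A=0$ the inner minimum is taken to equal $n$. *)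

theory Defs
  imports "HOL-Analysis.Analysis"
begin

text \<open>Simple graphs on a finite vertex type 'n (playing the role of {1..n}):
  a symmetric irreflexive edge relation.\<close>
definition simple_graph :: "('n \<Rightarrow> 'n \<Rightarrow> bool) \<Rightarrow> bool" where
  "simple_graph E \<longleftrightarrow> (\<forall>i j. E i j \<longleftrightarrow> E j i) \<and> (\<forall>i. \<not> E i i)"

definition weighted_adj :: "('n::finite \<Rightarrow> 'n \<Rightarrow> bool) \<Rightarrow> real^'n^'n \<Rightarrow> bool" where
  "weighted_adj E A \<longleftrightarrow> transpose A = A \<and> (\<forall>i. A $ i $ i = 0)
      \<and> (\<forall>i j. i \<noteq> j \<and> \<not> E i j \<longrightarrow> A $ i $ j = 0)"

definition S_set :: "(real^'n::finite) set" where
  "S_set = {v. (1::real^'n) \<bullet> v = (norm v)\<^sup>2}"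

definition alpha_S :: "('n::finite \<Rightarrow> 'n \<Rightarrow> bool) \<Rightarrow> ereal" where
  "alpha_S E = (INF A\<in>{A. weighted_adj E A}.
      Sup {ereal ((norm v)\<^sup>2) | v. v \<in> S_set \<and> v \<bullet> (A *v v) = 0})"

definition mat_spectrum :: "real^'n^'n \<Rightarrow> real set" where
  "mat_spectrum A = {\<mu>. \<exists>v. v \<noteq> 0 \<and> A *v v = \<mu> *\<^sub>R v}"

definition eigenspace :: "real^'n^'n \<Rightarrow> real \<Rightarrow> (real^'n) set" where
  "eigenspace A \<mu> = {v. A *v v = \<mu> *\<^sub>R v}"

definition orth_proj :: "(real^'n) set \<Rightarrow> real^'n \<Rightarrow> real^'n" where
  "orth_proj U x = (THE p. p \<in> U \<and> (\<forall>u\<in>U. (x - p) \<bullet> u = 0))"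

definition spec_proj :: "real^'n^'n \<Rightarrow> real \<Rightarrow> real^'n \<Rightarrow> real^'n" where
  "spec_proj A \<mu> = orth_proj (eigenspace A \<mu>)"

definition spec_weight :: "real^'n::finite^'n \<Rightarrow> real \<Rightarrow> real" where
  "spec_weight A \<mu> = (1::real^'n) \<bullet> spec_proj A \<mu> 1"

definition W_fun :: "real^'n::finite^'n \<Rightarrow> real \<Rightarrow> ereal" where
  "W_fun A x = (if \<exists>\<mu>\<in>mat_spectrum A. spec_weight A \<mu> \<noteq> 0 \<and> 1 - \<mu> * x = 0 then \<infinity>
     else ereal (\<Sum>\<mu>\<in>{\<mu>\<in>mat_spectrum A. spec_weight A \<mu> \<noteq> 0}. spec_weight A \<mu> / (1 - \<mu> * x)))"

definition lambda_min :: "real^'n^'n \<Rightarrow> real" where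
  "lambda_min A = Min (mat_spectrum A)"

definition lambda_max :: "real^'n^'n \<Rightarrow> real" where
  "lambda_max A = Max (mat_spectrum A)"

definition W_min :: "real^'n::finite^'n \<Rightarrow> ereal" where
  "W_min A = (if A = 0 then ereal (real CARD('n))
     else Inf (W_fun A ` {inverse (lambda_min A) .. inverse (lambda_max A)}))"

end

theory Submission
  imports Defs
begin

text \<open>Fix \<open>A = \<Sum> \<mu> P\<^sub>\<mu>\<close>. If \<open>\<langle>v, A v\<rangle> = 0\<close> and \<open>\<langle>1, v\<rangle> = |v|\<^sup>2\<close>, then for every \<open>x\<close> with
  \<open>1 - \<mu>x \<ge> 0\<close> on the spectrum, i.e. \<open>x \<in> [1/\<lambda>min, 1/\<lambda>max]\<close>, AM-GM applied to the terms
  \<open>\<langle>P\<^sub>\<mu> 1, P\<^sub>\<mu> v\<rangle>\<close> with weights \<open>1 - \<mu>x\<close> gives \<open>|v|\<^sup>2 \<le> W\<^sub>A(x)\<close>.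
  Conversely \<open>u = \<Sum> P\<^sub>\<mu> 1 / (1 - \<mu>x)\<close> lies in \<open>S\<^sub>n\<close>, has \<open>|u|\<^sup>2 = W\<^sub>A(x) + x W\<^sub>A'(x)\<close> and
  \<open>\<langle>u, A u\<rangle> = W\<^sub>A'(x)\<close>, so a critical point of \<open>W\<^sub>A\<close> in the interval gives equality. The
  intermediate value theorem, applied to the numerator of \<open>W\<^sub>A'\<close>, finds one unless the sign of
  \<open>W\<^sub>A'\<close> at an endpoint \<open>1/\<mu>\<close> with \<open>P\<^sub>\<mu> 1 = 0\<close> points out of the interval; there a
  suitable \<open>\<mu>\<close>-eigenvector added to \<open>u\<close> restores \<open>\<langle>u, A u\<rangle> = 0\<close>. The interval is
  nondegenerate because a nonzero symmetric matrix with zero diagonal is indefinite.\<close>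

section \<open>Spectral decomposition of real symmetric matrices\<close>

lemma inner_matrix_vector_symmetric:
  fixes A :: "real^'n::finite^'n"
  assumes "transpose A = A"
  shows "x \<bullet> (A *v y) = (A *v x) \<bullet> y"
  by (metis assms dot_lmul_matrix transpose_matrix_vector)

lemma quadratic_nonneg_imp_linear_coeff_zero:
  fixes a c :: real
  assumes nonneg: "\<And>t. 0 \<le> 2 * t * a + t\<^sup>2 * c"
  shows "a = 0"
proof (rule ccontr)
  assume "a \<noteq> 0"
  define d where "d = \<bar>c\<bar> + 1"
  define t where "t = - a / d"
  have "d > 0" by (simp add: d_def)
  have "2 * t * a + t\<^sup>2 * c \<le> 2 * t * a + t\<^sup>2 * (d - 1)"
    by (simp add: d_def mult_left_mono)
  also have "\<dots> = - a\<^sup>2 * (d + 1) / d\<^sup>2"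
    using \<open>d > 0\<close> by (simp add: t_def field_simps power2_eq_square)
  also have "\<dots> < 0"
    using \<open>a \<noteq> 0\<close> \<open>d > 0\<close> by (intro divide_neg_pos) auto
  finally show False using nonneg[of t] by simp
qed

lemma nonneg_form_zero_imp_orthogonal:
  fixes f :: "'a::real_inner \<Rightarrow> 'a"
  assumes f: "linear f" and sym: "\<And>x y. x \<bullet> f y = f x \<bullet> y"
    and V: "subspace V" and nonneg: "\<And>y. y \<in> V \<Longrightarrow> 0 \<le> y \<bullet> f y"
    and w: "w \<in> V" "w \<bullet> f w = 0" and x: "x \<in> V"
  shows "x \<bullet> f w = 0"
proof (rule quadratic_nonneg_imp_linear_coeff_zero)
  fix t :: real
  have "(w + t *\<^sub>R x) \<bullet> f (w + t *\<^sub>R x) = 2 * t * (x \<bullet> f w) + t\<^sup>2 * (x \<bullet> f x)"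
    using w(2) sym[of x w]
    by (simp add: linear_add[OF f] linear_scale[OF f] inner_add_left inner_add_right
        inner_commute power2_eq_square algebra_simps)
  moreover have "w + t *\<^sub>R x \<in> V"
    using V w x by (simp add: subspace_add subspace_scale)
  ultimately show "0 \<le> 2 * t * (x \<bullet> f w) + t\<^sup>2 * (x \<bullet> f x)"
    using nonneg by metis
qed

lemma quadratic_form_max_on_subspace:
  fixes A :: "real^'n::finite^'n"
  assumes V: "subspace V" and nontriv: "V \<noteq> {0}"
  obtains w where "w \<in> V" "norm w = 1"
    "\<And>y. y \<in> V \<Longrightarrow> y \<bullet> (A *v y) \<le> (w \<bullet> (A *v w)) * (norm y)\<^sup>2"
proof -
  let ?K = "V \<inter> sphere 0 1"
  obtain y where "y \<in> V" "y \<noteq> 0" using nontriv subspace_0[OF V] by blast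
  then have "y /\<^sub>R norm y \<in> ?K" using V by (simp add: subspace_scale)
  moreover have "compact ?K"
    using closed_subspace[OF V] by (simp add: closed_Int_compact)
  moreover have "continuous_on ?K (\<lambda>y. y \<bullet> (A *v y))"
    by (intro continuous_intros matrix_vector_mult_linear_continuous_on)
  ultimately obtain w where w: "w \<in> ?K"
    and max: "\<And>y. y \<in> ?K \<Longrightarrow> y \<bullet> (A *v y) \<le> w \<bullet> (A *v w)"
    using continuous_attains_sup[of ?K] by blast
  have "y \<bullet> (A *v y) \<le> (w \<bullet> (A *v w)) * (norm y)\<^sup>2" if "y \<in> V" for y
  proof (cases "y = 0")
    case False
    then have "y /\<^sub>R norm y \<in> ?K" using that V by (simp add: subspace_scale)
    then have "(y /\<^sub>R norm y) \<bullet> (A *v (y /\<^sub>R norm y)) \<le> w \<bullet> (A *v w)"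
      by (rule max)
    then show ?thesis
      using False by (simp add: matrix_vector_mult_scaleR power2_eq_square divide_simps)
  qed simp
  with w that show ?thesis by auto
qed

text \<open>For a maximiser \<open>w\<close> of the Rayleigh quotient on \<open>V\<close> and \<open>\<mu>\<close> the maximum, the form of
  \<open>\<mu> - A\<close> is nonnegative on \<open>V\<close> and vanishes at \<open>w\<close>.\<close>
lemma symmetric_invariant_subspace_has_eigenvector:
  fixes A :: "real^'n::finite^'n"
  assumes sym: "transpose A = A" and V: "subspace V"
    and inv: "\<And>x. x \<in> V \<Longrightarrow> A *v x \<in> V" and nontriv: "V \<noteq> {0}"
  obtains w \<mu> where "w \<in> V" "w \<noteq> 0" "A *v w = \<mu> *\<^sub>R w"
proof -
  obtain w where wV: "w \<in> V" and "norm w = 1"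
    and max: "\<And>y. y \<in> V \<Longrightarrow> y \<bullet> (A *v y) \<le> (w \<bullet> (A *v w)) * (norm y)\<^sup>2"
    using quadratic_form_max_on_subspace[OF V nontriv] by blast
  define \<mu> where "\<mu> = w \<bullet> (A *v w)"
  define f where "f y = \<mu> *\<^sub>R y - A *v y" for y
  have "w \<noteq> 0" and ww: "w \<bullet> w = 1"
    using \<open>norm w = 1\<close> by (auto simp: dot_square_norm)
  have f: "linear f"
    by (rule linearI) (simp_all add: f_def matrix_vector_right_distrib
        matrix_vector_mult_scaleR algebra_simps)
  have fsym: "x \<bullet> f y = f x \<bullet> y" for x y
    using inner_matrix_vector_symmetric[OF sym, of x y]
    by (simp add: f_def inner_diff_left inner_diff_right inner_commute)
  have fV: "f y \<in> V" if "y \<in> V" for y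
    using that inv V by (simp add: f_def subspace_diff subspace_scale)
  have nonneg: "0 \<le> y \<bullet> f y" if "y \<in> V" for y
    using max[OF that] by (simp add: f_def \<mu>_def inner_diff_right dot_square_norm)
  have "w \<bullet> f w = 0" by (simp add: f_def inner_diff_right ww \<mu>_def)
  then have "f w \<bullet> f w = 0"
    using nonneg_form_zero_imp_orthogonal[OF f fsym V nonneg wV] fV wV by blast
  then have "A *v w = \<mu> *\<^sub>R w" by (simp add: f_def)
  with wV \<open>w \<noteq> 0\<close> that show ?thesis by blast
qed

lemma subspace_eigenspace: "subspace (eigenspace A \<mu>)"
  unfolding subspace_def eigenspace_def
  by (simp add: matrix_vector_right_distrib matrix_vector_mult_scaleR scaleR_add_right)

lemma orth_proj_characterization:
  fixes U :: "(real^'n::finite) set"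
  assumes U: "subspace U"
  shows "orth_proj U x \<in> U" and "\<And>u. u \<in> U \<Longrightarrow> (x - orth_proj U x) \<bullet> u = 0"
proof -
  obtain p z where "p \<in> span U" "\<And>u. u \<in> span U \<Longrightarrow> orthogonal z u" "x = p + z"
    using orthogonal_subspace_decomp_exists[of U x] by metis
  moreover have "span U = U" using U by (simp add: span_eq_iff)
  ultimately have ex: "p \<in> U \<and> (\<forall>u\<in>U. (x - p) \<bullet> u = 0)"
    by (simp add: orthogonal_def)
  have "q = p" if q: "q \<in> U \<and> (\<forall>u\<in>U. (x - q) \<bullet> u = 0)" for q
  proof -
    have "q - p \<in> U" using q ex U by (simp add: subspace_diff)
    then have "(x - p) \<bullet> (q - p) - (x - q) \<bullet> (q - p) = 0" using q ex by simp
    then have "(q - p) \<bullet> (q - p) = 0" by (simp add: inner_diff_left)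
    then show "q = p" by simp
  qed
  with ex have "orth_proj U x \<in> U \<and> (\<forall>u\<in>U. (x - orth_proj U x) \<bullet> u = 0)"
    unfolding orth_proj_def by (rule theI)
  then show "orth_proj U x \<in> U" and "\<And>u. u \<in> U \<Longrightarrow> (x - orth_proj U x) \<bullet> u = 0"
    by blast+
qed

lemma spec_proj_in_eigenspace: "spec_proj A \<mu> x \<in> eigenspace A \<mu>"
  unfolding spec_proj_def by (rule orth_proj_characterization(1)[OF subspace_eigenspace])

lemma inner_spec_proj: "u \<in> eigenspace A \<mu> \<Longrightarrow> spec_proj A \<mu> x \<bullet> u = x \<bullet> u"
  using orth_proj_characterization(2)[OF subspace_eigenspace, of u A \<mu> x]
  unfolding spec_proj_def by (simp add: inner_diff_left)

lemma eigenspaces_orthogonal: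
  fixes A :: "real^'n::finite^'n"
  assumes sym: "transpose A = A" and "x \<in> eigenspace A \<mu>" "y \<in> eigenspace A \<nu>" "\<mu> \<noteq> \<nu>"
  shows "x \<bullet> y = 0"
proof -
  have "\<mu> * (x \<bullet> y) = (A *v x) \<bullet> y" using assms by (simp add: eigenspace_def)
  also have "\<dots> = x \<bullet> (A *v y)" by (simp add: inner_matrix_vector_symmetric[OF sym])
  also have "\<dots> = \<nu> * (x \<bullet> y)" using assms by (simp add: eigenspace_def)
  finally show ?thesis using \<open>\<mu> \<noteq> \<nu>\<close> by simp
qed

lemma eigenspace_outside_spectrum:
  "\<mu> \<notin> mat_spectrum A \<Longrightarrow> y \<in> eigenspace A \<mu> \<Longrightarrow> y = 0"
  unfolding mat_spectrum_def eigenspace_def by blast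

lemma finite_mat_spectrum:
  fixes A :: "real^'n::finite^'n"
  assumes sym: "transpose A = A"
  shows "finite (mat_spectrum A)"
proof -
  let ?L = "mat_spectrum A"
  have "\<forall>\<mu>\<in>?L. \<exists>v. v \<noteq> 0 \<and> v \<in> eigenspace A \<mu>"
    by (auto simp: mat_spectrum_def eigenspace_def)
  then obtain v where v: "\<And>\<mu>. \<mu> \<in> ?L \<Longrightarrow> v \<mu> \<noteq> 0 \<and> v \<mu> \<in> eigenspace A \<mu>"
    by (metis bchoice)
  have orth: "v \<mu> \<bullet> v \<nu> = 0" if "\<mu> \<in> ?L" "\<nu> \<in> ?L" "\<mu> \<noteq> \<nu>" for \<mu> \<nu>
    using eigenspaces_orthogonal[OF sym] v that by blast
  have "inj_on v ?L"
    using orth v by (metis inj_onI inner_eq_zero_iff)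
  moreover have "independent (v ` ?L)"
    using orth v by (intro pairwise_orthogonal_independent)
      (auto simp: pairwise_def orthogonal_def)
  ultimately show ?thesis
    using independent_imp_finite finite_imageD by blast
qed

text \<open>The vectors orthogonal to all eigenspaces form an \<open>A\<close>-invariant subspace without
  eigenvectors.\<close>
lemma orthogonal_to_eigenspaces_eq_0:
  fixes A :: "real^'n::finite^'n"
  assumes sym: "transpose A = A" and r: "\<And>\<nu> y. y \<in> eigenspace A \<nu> \<Longrightarrow> r \<bullet> y = 0"
  shows "r = 0"
proof -
  define V where "V = {r. \<forall>\<nu> y. y \<in> eigenspace A \<nu> \<longrightarrow> r \<bullet> y = 0}"
  have "subspace V" unfolding V_def subspace_def by (auto simp: inner_add_left)
  have inv: "A *v x \<in> V" if "x \<in> V" for x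
  proof -
    have "(A *v x) \<bullet> y = 0" if y: "y \<in> eigenspace A \<nu>" for \<nu> y
    proof -
      have "(A *v x) \<bullet> y = x \<bullet> (A *v y)"
        by (simp add: inner_matrix_vector_symmetric[OF sym])
      also have "\<dots> = \<nu> * (x \<bullet> y)"
        using y by (simp add: eigenspace_def)
      also have "\<dots> = 0"
        using \<open>x \<in> V\<close> y by (simp add: V_def)
      finally show ?thesis .
    qed
    then show ?thesis by (simp add: V_def)
  qed
  have "V = {0}"
  proof (rule ccontr)
    assume "V \<noteq> {0}"
    then obtain w \<mu> where "w \<in> V" "w \<noteq> 0" "A *v w = \<mu> *\<^sub>R w"
      using symmetric_invariant_subspace_has_eigenvector[OF sym \<open>subspace V\<close> inv] by blast
    then have "w \<bullet> w = 0" by (auto simp: V_def eigenspace_def)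
    with \<open>w \<noteq> 0\<close> show False by simp
  qed
  moreover have "r \<in> V" using r by (simp add: V_def)
  ultimately show ?thesis by blast
qed

lemma sum_spec_proj:
  fixes A :: "real^'n::finite^'n"
  assumes sym: "transpose A = A"
  shows "(\<Sum>\<mu>\<in>mat_spectrum A. spec_proj A \<mu> v) = v"
proof -
  let ?L = "mat_spectrum A"
  have "(v - (\<Sum>\<mu>\<in>?L. spec_proj A \<mu> v)) \<bullet> y = 0" if y: "y \<in> eigenspace A \<nu>" for \<nu> y
  proof (cases "\<nu> \<in> ?L")
    case True
    have "(\<Sum>\<mu>\<in>?L. spec_proj A \<mu> v) \<bullet> y = (\<Sum>\<mu>\<in>?L. if \<mu> = \<nu> then v \<bullet> y else 0)"
      unfolding inner_sum_left
      using eigenspaces_orthogonal[OF sym spec_proj_in_eigenspace y] inner_spec_proj[OF y]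
      by (intro sum.cong) auto
    also have "\<dots> = v \<bullet> y" using True finite_mat_spectrum[OF sym] by simp
    finally show ?thesis by (simp add: inner_diff_left)
  next
    case False
    then show ?thesis using eigenspace_outside_spectrum[OF False y] by simp
  qed
  then show ?thesis using orthogonal_to_eigenspaces_eq_0[OF sym] by fastforce
qed

lemma inner_sum_eigenvectors:
  fixes A :: "real^'n::finite^'n"
  assumes sym: "transpose A = A" and fin: "finite L"
    and a: "\<And>\<mu>. \<mu> \<in> L \<Longrightarrow> a \<mu> \<in> eigenspace A \<mu>"
    and b: "\<And>\<mu>. \<mu> \<in> L \<Longrightarrow> b \<mu> \<in> eigenspace A \<mu>"
  shows "(\<Sum>\<mu>\<in>L. a \<mu>) \<bullet> (\<Sum>\<mu>\<in>L. b \<mu>) = (\<Sum>\<mu>\<in>L. a \<mu> \<bullet> b \<mu>)"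
proof -
  have "(\<Sum>\<mu>\<in>L. a \<mu>) \<bullet> (\<Sum>\<mu>\<in>L. b \<mu>) = (\<Sum>\<mu>\<in>L. \<Sum>\<nu>\<in>L. a \<mu> \<bullet> b \<nu>)"
    by (simp only: inner_sum_left inner_sum_right) (rule sum.swap)
  also have "\<dots> = (\<Sum>\<mu>\<in>L. \<Sum>\<nu>\<in>L. if \<nu> = \<mu> then a \<mu> \<bullet> b \<mu> else 0)"
    using eigenspaces_orthogonal[OF sym] a b by (intro sum.cong refl) (metis (full_types))
  also have "\<dots> = (\<Sum>\<mu>\<in>L. a \<mu> \<bullet> b \<mu>)" using fin by simp
  finally show ?thesis .
qed

lemma spectral_identities:
  fixes A :: "real^'n::finite^'n"
  assumes sym: "transpose A = A"
  shows "v \<bullet> v = (\<Sum>\<mu>\<in>mat_spectrum A. spec_proj A \<mu> v \<bullet> spec_proj A \<mu> v)"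
    and "v \<bullet> (A *v v) = (\<Sum>\<mu>\<in>mat_spectrum A. \<mu> * (spec_proj A \<mu> v \<bullet> spec_proj A \<mu> v))"
    and "u \<bullet> v = (\<Sum>\<mu>\<in>mat_spectrum A. spec_proj A \<mu> u \<bullet> spec_proj A \<mu> v)"
proof -
  let ?L = "mat_spectrum A"
  note fin = finite_mat_spectrum[OF sym]
  note in_eig = spec_proj_in_eigenspace
  have "\<mu> *\<^sub>R spec_proj A \<mu> v \<in> eigenspace A \<mu>" for \<mu>
    using subspace_eigenspace in_eig subspace_scale by blast
  moreover have "A *v v = (\<Sum>\<mu>\<in>?L. \<mu> *\<^sub>R spec_proj A \<mu> v)"
    by (subst (1) sum_spec_proj[OF sym, symmetric])
      (simp add: vec.sum in_eig[unfolded eigenspace_def, simplified])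
  ultimately show "v \<bullet> (A *v v) = (\<Sum>\<mu>\<in>?L. \<mu> * (spec_proj A \<mu> v \<bullet> spec_proj A \<mu> v))"
    by (subst (1) sum_spec_proj[OF sym, symmetric])
      (simp add: inner_sum_eigenvectors[OF sym fin in_eig])
  have inner: "x \<bullet> y = (\<Sum>\<mu>\<in>?L. spec_proj A \<mu> x \<bullet> spec_proj A \<mu> y)" for x y
    by (subst (1 2) sum_spec_proj[OF sym, symmetric])
      (rule inner_sum_eigenvectors[OF sym fin in_eig in_eig])
  show "u \<bullet> v = (\<Sum>\<mu>\<in>?L. spec_proj A \<mu> u \<bullet> spec_proj A \<mu> v)"
    and "v \<bullet> v = (\<Sum>\<mu>\<in>?L. spec_proj A \<mu> v \<bullet> spec_proj A \<mu> v)"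
    by (rule inner)+
qed

lemma spec_weight_eq_inner: "spec_weight A \<mu> = spec_proj A \<mu> 1 \<bullet> spec_proj A \<mu> 1"
  unfolding spec_weight_def using inner_spec_proj[OF spec_proj_in_eigenspace, of A \<mu> 1 1] by simp

lemma spec_weight_nonneg: "0 \<le> spec_weight A \<mu>"
  by (simp add: spec_weight_eq_inner)

lemma spec_weight_eq_0_iff: "spec_weight A \<mu> = 0 \<longleftrightarrow> spec_proj A \<mu> 1 = 0"
  by (simp add: spec_weight_eq_inner)

lemma inner_axis_matrix_axis: "axis i 1 \<bullet> ((A::real^'n::finite^'n) *v axis j 1) = A $ i $ j"
  by (simp add: inner_commute[of "axis i 1"] inner_axis matrix_vector_mul_component)

lemma semidefinite_zero_diagonal_eq_0:
  fixes A :: "real^'n::finite^'n"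
  assumes sym: "transpose A = A" and diag: "\<And>i. A $ i $ i = 0"
    and "s \<noteq> 0" and semidef: "\<And>v. 0 \<le> s * (v \<bullet> (A *v v))"
  shows "A = 0"
proof -
  have "A $ i $ j = 0" if "i \<noteq> j" for i j
  proof -
    have "s * A $ i $ j = 0"
    proof (rule quadratic_nonneg_imp_linear_coeff_zero)
      fix t :: real
      have "A $ j $ i = A $ i $ j"
        using sym unfolding transpose_def by (metis vec_lambda_beta)
      then have "(axis i 1 + t *\<^sub>R axis j 1) \<bullet> (A *v (axis i 1 + t *\<^sub>R axis j 1))
          = 2 * t * A $ i $ j"
        by (simp add: matrix_vector_right_distrib matrix_vector_mult_scaleR inner_add_left
            inner_add_right inner_axis_matrix_axis diag)
      then show "0 \<le> 2 * t * (s * A $ i $ j) + t\<^sup>2 * 0"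
        using semidef by (metis add_0_right mult.left_commute mult_zero_right)
    qed
    then show ?thesis using \<open>s \<noteq> 0\<close> by simp
  qed
  then show ?thesis by (metis diag vec_eq_iff zero_index)
qed

lemma mat_spectrum_neg_pos:
  fixes A :: "real^'n::finite^'n"
  assumes sym: "transpose A = A" and diag: "\<And>i. A $ i $ i = 0" and "A \<noteq> 0"
  obtains \<mu> \<nu> where "\<mu> \<in> mat_spectrum A" "\<mu> < 0" "\<nu> \<in> mat_spectrum A" "0 < \<nu>"
proof -
  have "\<exists>\<mu>\<in>mat_spectrum A. \<mu> < 0"
  proof (rule ccontr)
    assume "\<not> ?thesis"
    then have "0 \<le> 1 * (v \<bullet> (A *v v))" for v
      by (simp add: spectral_identities(2)[OF sym] sum_nonneg not_less)
    then show False using semidefinite_zero_diagonal_eq_0[OF sym diag, of 1] \<open>A \<noteq> 0\<close> by simp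
  qed
  moreover have "\<exists>\<nu>\<in>mat_spectrum A. 0 < \<nu>"
  proof (rule ccontr)
    assume "\<not> ?thesis"
    then have "0 \<le> -1 * (v \<bullet> (A *v v))" for v
      by (simp add: spectral_identities(2)[OF sym] sum_nonpos not_less mult_nonpos_nonneg)
    then show False using semidefinite_zero_diagonal_eq_0[OF sym diag, of "-1"] \<open>A \<noteq> 0\<close> by simp
  qed
  ultimately show ?thesis using that by blast
qed

section \<open>The function \<open>W\<^sub>A\<close>\<close>

lemma inner_le_weighted_norms:
  fixes x y :: "'a::real_inner"
  assumes "0 < c"
  shows "2 * (x \<bullet> y) \<le> (x \<bullet> x) / c + c * (y \<bullet> y)"
proof -
  have "0 \<le> (x - c *\<^sub>R y) \<bullet> (x - c *\<^sub>R y)" by simp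
  then have "2 * (x \<bullet> y) * c \<le> x \<bullet> x + c * (y \<bullet> y) * c"
    by (simp add: inner_diff_left inner_diff_right inner_commute power2_eq_square algebra_simps)
  then show ?thesis using assms by (simp add: field_simps)
qed

lemma one_minus_mult_nonneg:
  fixes l L \<mu> x :: real
  assumes "l < 0" "0 < L" "l \<le> \<mu>" "\<mu> \<le> L" "inverse l \<le> x" "x \<le> inverse L"
  shows "0 \<le> 1 - \<mu> * x"
proof (cases "0 \<le> \<mu>")
  case True
  then have "\<mu> * x \<le> \<mu> / L" using assms by (simp add: mult_left_mono divide_inverse)
  also have "\<dots> \<le> 1" using assms by simp
  finally show ?thesis by simp
next
  case False
  then have "\<mu> * x \<le> \<mu> / l" using assms by (simp add: mult_left_mono_neg divide_inverse)
  also have "\<dots> \<le> 1" using assms by (simp add: divide_le_eq)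
  finally show ?thesis by simp
qed

lemma one_minus_mult_pos:
  fixes l L \<mu> x :: real
  assumes "l < 0" "0 < L" "l \<le> \<mu>" "\<mu> \<le> L" "inverse l \<le> x" "x \<le> inverse L"
    and "l < \<mu> \<or> inverse l < x" "\<mu> < L \<or> x < inverse L"
  shows "0 < 1 - \<mu> * x"
proof (cases "0 < \<mu>")
  case True
  have "\<mu> * x \<le> \<mu> / L" using assms True by (simp add: mult_left_mono divide_inverse)
  moreover have "\<mu> / L \<le> 1" using assms by simp
  moreover have "\<mu> * x < \<mu> / L \<or> \<mu> / L < 1"
    using assms True by (metis divide_inverse divide_less_eq_1_pos mult_strict_left_mono)
  ultimately show ?thesis by linarith
next
  case False
  have "\<mu> * x \<le> \<mu> / l" using assms False by (simp add: mult_left_mono_neg divide_inverse)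
  moreover have "\<mu> / l \<le> 1" using assms by (simp add: divide_le_eq)
  moreover have "\<mu> * x < \<mu> / l \<or> \<mu> / l < 1 \<or> \<mu> = 0"
    using assms False
    by (metis divide_inverse divide_less_eq_1_neg linorder_neqE_linordered_idom
        mult_strict_left_mono_neg)
  ultimately show ?thesis by (auto simp: linorder_not_less)
qed

definition weighted_spectrum :: "real^'n::finite^'n \<Rightarrow> real set" where
  "weighted_spectrum A = {\<mu> \<in> mat_spectrum A. spec_weight A \<mu> \<noteq> 0}"

definition W_sum :: "real^'n::finite^'n \<Rightarrow> real \<Rightarrow> real" where
  "W_sum A x = (\<Sum>\<mu>\<in>weighted_spectrum A. spec_weight A \<mu> / (1 - \<mu> * x))"

text \<open>\<open>W_deriv A\<close> is the derivative of \<open>W_sum A\<close>; \<open>W_deriv_numerator A\<close> is it with the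
  denominators cleared, a polynomial that stays continuous across the poles.\<close>
definition W_deriv :: "real^'n::finite^'n \<Rightarrow> real \<Rightarrow> real" where
  "W_deriv A x = (\<Sum>\<mu>\<in>weighted_spectrum A. \<mu> * spec_weight A \<mu> / (1 - \<mu> * x)\<^sup>2)"

definition W_deriv_numerator :: "real^'n::finite^'n \<Rightarrow> real \<Rightarrow> real" where
  "W_deriv_numerator A x = (\<Sum>\<mu>\<in>weighted_spectrum A.
     \<mu> * spec_weight A \<mu> * (\<Prod>\<nu>\<in>weighted_spectrum A - {\<mu>}. (1 - \<nu> * x)\<^sup>2))"

lemma finite_weighted_spectrum:
  "transpose A = A \<Longrightarrow> finite (weighted_spectrum (A::real^'n::finite^'n))"
  unfolding weighted_spectrum_def by (simp add: finite_mat_spectrum)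

lemma spec_weight_pos: "\<mu> \<in> weighted_spectrum A \<Longrightarrow> 0 < spec_weight A \<mu>"
  using spec_weight_nonneg[of A \<mu>] by (simp add: weighted_spectrum_def)

lemma W_fun_eq_W_sum:
  "\<forall>\<mu>\<in>weighted_spectrum A. 1 - \<mu> * x \<noteq> 0 \<Longrightarrow> W_fun A x = ereal (W_sum A x)"
  unfolding W_fun_def W_sum_def weighted_spectrum_def by auto

lemma sum_spec_proj_one:
  fixes A :: "real^'n::finite^'n"
  assumes sym: "transpose A = A"
  shows "(\<Sum>\<mu>\<in>weighted_spectrum A. spec_proj A \<mu> 1) = 1"
proof -
  have "(\<Sum>\<mu>\<in>weighted_spectrum A. spec_proj A \<mu> 1) = (\<Sum>\<mu>\<in>mat_spectrum A. spec_proj A \<mu> 1)"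
    using finite_mat_spectrum[OF sym]
    by (intro sum.mono_neutral_left) (auto simp: weighted_spectrum_def spec_weight_eq_0_iff)
  then show ?thesis by (simp add: sum_spec_proj[OF sym])
qed

text \<open>The quadratic terms of the AM-GM bounds add up to at most
  \<open>|v|\<^sup>2 - x \<langle>v, A v\<rangle> = |v|\<^sup>2\<close>.\<close>
lemma norm_le_W_fun:
  fixes A :: "real^'n::finite^'n"
  assumes sym: "transpose A = A"
    and nonneg: "\<forall>\<mu>\<in>mat_spectrum A. 0 \<le> 1 - \<mu> * x"
    and v: "1 \<bullet> v = v \<bullet> v" "v \<bullet> (A *v v) = 0"
  shows "ereal (v \<bullet> v) \<le> W_fun A x"
proof (cases "\<forall>\<mu>\<in>weighted_spectrum A. 1 - \<mu> * x \<noteq> 0")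
  case False
  then show ?thesis by (auto simp: W_fun_def weighted_spectrum_def)
next
  case True
  let ?L = "mat_spectrum A" and ?P = "weighted_spectrum A"
  define c where "c \<mu> = 1 - \<mu> * x" for \<mu>
  define p where "p \<mu> = spec_proj A \<mu> v" for \<mu>
  define e where "e \<mu> = spec_proj A \<mu> 1" for \<mu>
  have fin: "finite ?L" by (rule finite_mat_spectrum[OF sym])
  have PL: "?P \<subseteq> ?L" by (auto simp: weighted_spectrum_def)
  have cpos: "0 < c \<mu>" if "\<mu> \<in> ?P" for \<mu>
    using True nonneg PL that by (force simp: c_def)
  have "v \<bullet> v = (\<Sum>\<mu>\<in>?L. e \<mu> \<bullet> p \<mu>)"
    using spectral_identities(3)[OF sym, of 1 v] v(1) by (simp add: e_def p_def)
  also have "\<dots> = (\<Sum>\<mu>\<in>?P. e \<mu> \<bullet> p \<mu>)"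
    using fin PL
    by (intro sum.mono_neutral_right) (auto simp: weighted_spectrum_def e_def spec_weight_eq_0_iff)
  finally have "2 * (v \<bullet> v) = (\<Sum>\<mu>\<in>?P. 2 * (e \<mu> \<bullet> p \<mu>))"
    by (simp add: sum_distrib_left)
  also have "\<dots> \<le> (\<Sum>\<mu>\<in>?P. (e \<mu> \<bullet> e \<mu>) / c \<mu> + c \<mu> * (p \<mu> \<bullet> p \<mu>))"
    by (intro sum_mono inner_le_weighted_norms cpos)
  also have "\<dots> = W_sum A x + (\<Sum>\<mu>\<in>?P. c \<mu> * (p \<mu> \<bullet> p \<mu>))"
    by (simp add: W_sum_def sum.distrib spec_weight_eq_inner e_def c_def)
  also have "(\<Sum>\<mu>\<in>?P. c \<mu> * (p \<mu> \<bullet> p \<mu>)) \<le> (\<Sum>\<mu>\<in>?L. c \<mu> * (p \<mu> \<bullet> p \<mu>))"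
    using fin PL nonneg by (intro sum_mono2) (auto simp: c_def)
  also have "\<dots> = v \<bullet> v - x * (v \<bullet> (A *v v))"
    unfolding spectral_identities(1,2)[OF sym, of v]
    by (simp add: c_def p_def sum_distrib_left sum_subtractf[symmetric] algebra_simps)
  finally have "v \<bullet> v \<le> W_sum A x" using v(2) by simp
  then show ?thesis using W_fun_eq_W_sum[OF True] by simp
qed

lemma S_set_iff: "v \<in> S_set \<longleftrightarrow> 1 \<bullet> v = v \<bullet> v"
  by (simp add: S_set_def power2_norm_eq_inner)

definition W_attained :: "real^'n::finite^'n \<Rightarrow> real \<Rightarrow> bool" where
  "W_attained A x \<longleftrightarrow> (\<exists>u\<in>S_set. u \<bullet> (A *v u) = 0 \<and> W_fun A x = ereal ((norm u)\<^sup>2))"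

definition W_vector :: "real^'n::finite^'n \<Rightarrow> real \<Rightarrow> real^'n" where
  "W_vector A x = (\<Sum>\<mu>\<in>weighted_spectrum A. (1 / (1 - \<mu> * x)) *\<^sub>R spec_proj A \<mu> 1)"

text \<open>\<open>W_vector A x\<close> is the equality case of the AM-GM step in \<open>norm_le_W_fun\<close>.\<close>
lemma W_vector_inner:
  fixes A :: "real^'n::finite^'n"
  assumes sym: "transpose A = A" and no_pole: "\<forall>\<mu>\<in>weighted_spectrum A. 1 - \<mu> * x \<noteq> 0"
  shows "1 \<bullet> W_vector A x = W_sum A x"
    and "W_vector A x \<bullet> (A *v W_vector A x) = W_deriv A x"
    and "W_vector A x \<bullet> W_vector A x = W_sum A x + x * W_deriv A x"
proof -
  let ?P = "weighted_spectrum A"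
  note finP = finite_weighted_spectrum[OF sym]
  define c where "c \<mu> = 1 - \<mu> * x" for \<mu>
  define a where "a \<mu> = (1 / c \<mu>) *\<^sub>R spec_proj A \<mu> 1" for \<mu>
  have s: "W_vector A x = (\<Sum>\<mu>\<in>?P. a \<mu>)" by (simp add: W_vector_def a_def c_def)
  have a_eig: "a \<mu> \<in> eigenspace A \<mu>" and Aa_eig: "\<mu> *\<^sub>R a \<mu> \<in> eigenspace A \<mu>" for \<mu>
    unfolding a_def using subspace_eigenspace spec_proj_in_eigenspace subspace_scale by blast+
  have aa: "a \<mu> \<bullet> a \<mu> = spec_weight A \<mu> / (c \<mu>)\<^sup>2" for \<mu>
    by (simp add: a_def spec_weight_eq_inner power2_eq_square)
  show "1 \<bullet> W_vector A x = W_sum A x"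
    by (simp add: s a_def W_sum_def inner_sum_right spec_weight_def c_def)
  have "A *v W_vector A x = (\<Sum>\<mu>\<in>?P. \<mu> *\<^sub>R a \<mu>)"
    using a_eig by (simp add: s vec.sum eigenspace_def)
  then show "W_vector A x \<bullet> (A *v W_vector A x) = W_deriv A x"
    unfolding s by (simp add: inner_sum_eigenvectors[OF sym finP a_eig Aa_eig] aa W_deriv_def c_def)
  have "spec_weight A \<mu> / c \<mu> + x * (\<mu> * spec_weight A \<mu> / (c \<mu>)\<^sup>2)
      = spec_weight A \<mu> / (c \<mu>)\<^sup>2" if "\<mu> \<in> ?P" for \<mu>
  proof -
    have "c \<mu> \<noteq> 0" using no_pole that by (simp add: c_def)
    then have "spec_weight A \<mu> / c \<mu> = spec_weight A \<mu> * c \<mu> / (c \<mu>)\<^sup>2"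
      by (simp add: power2_eq_square)
    then show ?thesis by (simp add: c_def add_divide_distrib[symmetric] algebra_simps)
  qed
  then show "W_vector A x \<bullet> W_vector A x = W_sum A x + x * W_deriv A x"
    unfolding s inner_sum_eigenvectors[OF sym finP a_eig a_eig] aa
    by (simp add: W_sum_def W_deriv_def c_def sum_distrib_left sum.distrib[symmetric])
qed

lemma W_attained_witness:
  fixes A :: "real^'n::finite^'n"
  assumes sym: "transpose A = A"
    and no_pole: "\<forall>\<mu>\<in>weighted_spectrum A. 1 - \<mu> * x \<noteq> 0"
    and z: "z \<in> eigenspace A \<mu>\<^sub>0" "\<forall>\<mu>\<in>weighted_spectrum A. spec_proj A \<mu> 1 \<bullet> z = 0"
    and z_pole: "(1 - \<mu>\<^sub>0 * x) * (z \<bullet> z) = 0"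
    and z_crit: "W_deriv A x + \<mu>\<^sub>0 * (z \<bullet> z) = 0"
  shows "W_attained A x"
proof -
  let ?P = "weighted_spectrum A"
  define s where "s = W_vector A x"
  define u where "u = s + z"
  note s = W_vector_inner[OF sym no_pole, folded s_def]
  have zs: "z \<bullet> s = 0"
    using z(2) by (simp add: s_def W_vector_def inner_sum_right inner_commute)
  have "1 \<bullet> z = (\<Sum>\<mu>\<in>?P. spec_proj A \<mu> 1) \<bullet> z"
    by (simp only: sum_spec_proj_one[OF sym])
  then have z1: "1 \<bullet> z = 0"
    using z(2) by (simp add: inner_sum_left)
  have Az: "A *v z = \<mu>\<^sub>0 *\<^sub>R z" using z(1) by (simp add: eigenspace_def)
  have "z \<bullet> (A *v s) = 0"
    using zs by (simp add: inner_matrix_vector_symmetric[OF sym] Az)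
  then have uAu: "u \<bullet> (A *v u) = 0"
    using s(2) zs z_crit
    by (simp add: u_def Az matrix_vector_right_distrib inner_add_left inner_add_right inner_commute)
  have "u \<bullet> u = s \<bullet> s + z \<bullet> z"
    using zs by (simp add: u_def inner_add_left inner_add_right inner_commute)
  also have "\<dots> = W_sum A x + (1 - \<mu>\<^sub>0 * x) * (z \<bullet> z)"
    using s(3) z_crit by (simp add: eq_neg_iff_add_eq_0[symmetric] algebra_simps)
  finally have "u \<bullet> u = W_sum A x" using z_pole by simp
  moreover have "1 \<bullet> u = W_sum A x" using s(1) z1 by (simp add: u_def inner_add_right)
  ultimately have "u \<in> S_set" "W_fun A x = ereal ((norm u)\<^sup>2)"
    using W_fun_eq_W_sum[OF no_pole] by (simp_all add: S_set_iff power2_norm_eq_inner)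
  then show ?thesis using uAu by (auto simp: W_attained_def)
qed

lemma W_deriv_numerator_eq:
  fixes A :: "real^'n::finite^'n"
  assumes sym: "transpose A = A" and no_pole: "\<forall>\<nu>\<in>weighted_spectrum A. 1 - \<nu> * x \<noteq> 0"
  shows "W_deriv_numerator A x = W_deriv A x * (\<Prod>\<nu>\<in>weighted_spectrum A. (1 - \<nu> * x)\<^sup>2)"
proof -
  let ?P = "weighted_spectrum A"
  have "\<mu> * spec_weight A \<mu> * (\<Prod>\<nu>\<in>?P - {\<mu>}. (1 - \<nu> * x)\<^sup>2)
      = \<mu> * spec_weight A \<mu> / (1 - \<mu> * x)\<^sup>2 * (\<Prod>\<nu>\<in>?P. (1 - \<nu> * x)\<^sup>2)" if "\<mu> \<in> ?P" for \<mu>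
    using no_pole that prod.remove[OF finite_weighted_spectrum[OF sym] that, of "\<lambda>\<nu>. (1 - \<nu> * x)\<^sup>2"]
    by simp
  then show ?thesis
    unfolding W_deriv_numerator_def W_deriv_def sum_distrib_right by (rule sum.cong[OF refl])
qed

lemma W_deriv_numerator_at_pole:
  fixes A :: "real^'n::finite^'n"
  assumes sym: "transpose A = A" and pole: "\<mu>\<^sub>0 \<in> weighted_spectrum A" "1 - \<mu>\<^sub>0 * x = 0"
  shows "W_deriv_numerator A x
    = \<mu>\<^sub>0 * spec_weight A \<mu>\<^sub>0 * (\<Prod>\<nu>\<in>weighted_spectrum A - {\<mu>\<^sub>0}. (1 - \<nu> * x)\<^sup>2)"
proof -
  let ?P = "weighted_spectrum A"
  note finP = finite_weighted_spectrum[OF sym]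
  have "(\<Prod>\<nu>\<in>?P - {\<mu>}. (1 - \<nu> * x)\<^sup>2) = 0" if "\<mu> \<in> ?P - {\<mu>\<^sub>0}" for \<mu>
    using finP pole that by (intro prod_zero) auto
  then have "(\<Sum>\<mu>\<in>?P - {\<mu>\<^sub>0}. \<mu> * spec_weight A \<mu> * (\<Prod>\<nu>\<in>?P - {\<mu>}. (1 - \<nu> * x)\<^sup>2)) = 0"
    by simp
  then show ?thesis
    unfolding W_deriv_numerator_def by (simp add: sum.remove[OF finP pole(1)])
qed

lemma W_attained_at_unweighted_pole:
  fixes A :: "real^'n::finite^'n"
  assumes sym: "transpose A = A" and \<mu>\<^sub>0: "\<mu>\<^sub>0 \<in> mat_spectrum A" "\<mu>\<^sub>0 \<notin> weighted_spectrum A"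
    and "\<mu>\<^sub>0 * x = 1" and "\<mu>\<^sub>0 * W_deriv A x \<le> 0"
    and no_pole: "\<forall>\<mu>\<in>weighted_spectrum A. 1 - \<mu> * x \<noteq> 0"
  shows "W_attained A x"
proof -
  have "\<mu>\<^sub>0 \<noteq> 0" using \<open>\<mu>\<^sub>0 * x = 1\<close> by auto
  obtain y where y: "y \<noteq> 0" "A *v y = \<mu>\<^sub>0 *\<^sub>R y" using \<mu>\<^sub>0 by (auto simp: mat_spectrum_def)
  define z where "z = (sqrt (- W_deriv A x / \<mu>\<^sub>0) / norm y) *\<^sub>R y"
  have z: "z \<in> eigenspace A \<mu>\<^sub>0"
    using y by (simp add: z_def eigenspace_def matrix_vector_mult_scaleR)
  have "0 \<le> - W_deriv A x / \<mu>\<^sub>0"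
    using \<open>\<mu>\<^sub>0 * W_deriv A x \<le> 0\<close> \<open>\<mu>\<^sub>0 \<noteq> 0\<close>
    by (smt (verit) divide_eq_0_iff zero_le_divide_iff mult_le_0_iff)
  then have "z \<bullet> z = - W_deriv A x / \<mu>\<^sub>0"
    using y by (simp add: z_def power_divide dot_square_norm[symmetric] power2_eq_square[symmetric])
  moreover have "\<forall>\<mu>\<in>weighted_spectrum A. spec_proj A \<mu> 1 \<bullet> z = 0"
    using \<mu>\<^sub>0(2) eigenspaces_orthogonal[OF sym spec_proj_in_eigenspace z] by metis
  ultimately show ?thesis
    using \<open>\<mu>\<^sub>0 * x = 1\<close> \<open>\<mu>\<^sub>0 \<noteq> 0\<close> by (intro W_attained_witness[OF sym no_pole z]) auto
qed

lemma W_attained_or_numerator_sign: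
  fixes A :: "real^'n::finite^'n"
  assumes sym: "transpose A = A" and \<mu>\<^sub>0: "\<mu>\<^sub>0 \<in> mat_spectrum A" "\<mu>\<^sub>0 * x = 1"
    and no_pole: "\<forall>\<nu>\<in>weighted_spectrum A - {\<mu>\<^sub>0}. 1 - \<nu> * x \<noteq> 0"
  shows "W_attained A x \<or> 0 < \<mu>\<^sub>0 * W_deriv_numerator A x"
proof -
  let ?P = "weighted_spectrum A"
  have prod_pos: "0 < (\<Prod>\<nu>\<in>?P - {\<mu>\<^sub>0}. (1 - \<nu> * x)\<^sup>2)"
    using no_pole by (intro prod_pos) auto
  have "\<mu>\<^sub>0 \<noteq> 0" using \<mu>\<^sub>0 by auto
  consider "\<mu>\<^sub>0 \<in> ?P" | "\<mu>\<^sub>0 \<notin> ?P" "0 < \<mu>\<^sub>0 * W_deriv A x" | "\<mu>\<^sub>0 \<notin> ?P" "\<mu>\<^sub>0 * W_deriv A x \<le> 0"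
    by linarith
  then show ?thesis
  proof cases
    case 1
    then have "\<mu>\<^sub>0 * W_deriv_numerator A x
        = \<mu>\<^sub>0\<^sup>2 * spec_weight A \<mu>\<^sub>0 * (\<Prod>\<nu>\<in>?P - {\<mu>\<^sub>0}. (1 - \<nu> * x)\<^sup>2)"
      using W_deriv_numerator_at_pole[OF sym 1] \<mu>\<^sub>0 by (simp add: power2_eq_square)
    then show ?thesis
      using prod_pos spec_weight_pos[OF 1] \<open>\<mu>\<^sub>0 \<noteq> 0\<close> by simp
  next
    case 2
    then have "?P - {\<mu>\<^sub>0} = ?P" by auto
    then have "\<mu>\<^sub>0 * W_deriv_numerator A x
        = (\<mu>\<^sub>0 * W_deriv A x) * (\<Prod>\<nu>\<in>?P - {\<mu>\<^sub>0}. (1 - \<nu> * x)\<^sup>2)"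
      using no_pole by (simp add: W_deriv_numerator_eq[OF sym])
    moreover have "0 < (\<mu>\<^sub>0 * W_deriv A x) * (\<Prod>\<nu>\<in>?P - {\<mu>\<^sub>0}. (1 - \<nu> * x)\<^sup>2)"
      using 2(2) prod_pos by (rule mult_pos_pos)
    ultimately show ?thesis by (simp only:) simp
  next
    case 3
    then have "\<forall>\<mu>\<in>?P. 1 - \<mu> * x \<noteq> 0" using no_pole by auto
    with 3 show ?thesis using W_attained_at_unweighted_pole[OF sym \<mu>\<^sub>0(1)] \<mu>\<^sub>0(2) by blast
  qed
qed

lemma W_attained_between_numerator_signs:
  fixes A :: "real^'n::finite^'n"
  assumes sym: "transpose A = A" and "a < b"
    and sign: "W_deriv_numerator A a < 0" "0 < W_deriv_numerator A b"
    and no_pole: "\<And>\<mu> x. \<mu> \<in> weighted_spectrum A \<Longrightarrow> a < x \<Longrightarrow> x < b \<Longrightarrow> 1 - \<mu> * x \<noteq> 0"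
  shows "\<exists>x\<in>{a..b}. W_attained A x"
proof -
  have "continuous_on {a..b} (W_deriv_numerator A)"
    unfolding W_deriv_numerator_def by (intro continuous_intros)
  then obtain x where x: "a \<le> x" "x \<le> b" "W_deriv_numerator A x = 0"
    using IVT'[of "W_deriv_numerator A" a 0 b] sign \<open>a < b\<close> by force
  then have "a < x" "x < b" using sign by (auto simp: order.order_iff_strict)
  then have no_pole_x: "\<forall>\<mu>\<in>weighted_spectrum A. 1 - \<mu> * x \<noteq> 0" using no_pole by blast
  then have "0 < (\<Prod>\<nu>\<in>weighted_spectrum A. (1 - \<nu> * x)\<^sup>2)" by (intro prod_pos) auto
  then have "W_deriv A x = 0"
    using x(3) W_deriv_numerator_eq[OF sym no_pole_x] by simp
  then have "W_attained A x"
    by (intro W_attained_witness[OF sym no_pole_x, of 0 0]) (simp_all add: eigenspace_def)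
  then show ?thesis using x by auto
qed

lemma W_attained_in_interval:
  fixes A :: "real^'n::finite^'n"
  assumes sym: "transpose A = A" and l: "l \<in> mat_spectrum A" "l < 0"
    and L: "L \<in> mat_spectrum A" "0 < L"
    and bounds: "\<And>\<mu>. \<mu> \<in> mat_spectrum A \<Longrightarrow> l \<le> \<mu> \<and> \<mu> \<le> L"
  obtains x where "x \<in> {inverse l..inverse L}" "W_attained A x"
proof -
  let ?P = "weighted_spectrum A" and ?h = "W_deriv_numerator A"
  define a where "a = inverse l"
  define b where "b = inverse L"
  have "a < 0" "0 < b" using l(2) L(2) by (simp_all add: a_def b_def)
  then have "a < b" by simp
  have pos: "0 < 1 - \<mu> * x"
    if "\<mu> \<in> mat_spectrum A" "a \<le> x" "x \<le> b" "l < \<mu> \<or> a < x" "\<mu> < L \<or> x < b" for \<mu> x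
    using one_minus_mult_pos[OF l(2) L(2)] bounds that by (simp add: a_def b_def)
  have P_spectrum: "\<mu> \<in> mat_spectrum A" if "\<mu> \<in> ?P" for \<mu>
    using that by (simp add: weighted_spectrum_def)
  have "\<forall>\<nu>\<in>?P - {L}. 1 - \<nu> * b \<noteq> 0"
  proof
    fix \<nu> assume "\<nu> \<in> ?P - {L}"
    then have "\<nu> \<in> mat_spectrum A" "\<nu> < L" using P_spectrum bounds by force+
    then show "1 - \<nu> * b \<noteq> 0" using pos[of \<nu> b] \<open>a < b\<close> by simp
  qed
  then have "W_attained A b \<or> 0 < L * ?h b"
    using L(2) by (intro W_attained_or_numerator_sign[OF sym L(1)]) (simp_all add: b_def)
  moreover have "\<forall>\<nu>\<in>?P - {l}. 1 - \<nu> * a \<noteq> 0"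
  proof
    fix \<nu> assume "\<nu> \<in> ?P - {l}"
    then have "\<nu> \<in> mat_spectrum A" "l < \<nu>" using P_spectrum bounds by force+
    then show "1 - \<nu> * a \<noteq> 0" using pos[of \<nu> a] \<open>a < b\<close> by simp
  qed
  then have "W_attained A a \<or> 0 < l * ?h a"
    using l(2) by (intro W_attained_or_numerator_sign[OF sym l(1)]) (simp_all add: a_def)
  moreover have "\<exists>x\<in>{a..b}. W_attained A x" if "?h a < 0" "0 < ?h b"
  proof (rule W_attained_between_numerator_signs[OF sym \<open>a < b\<close> that])
    fix \<mu> x assume "\<mu> \<in> ?P" "a < x" "x < b"
    then show "1 - \<mu> * x \<noteq> 0" using pos[of \<mu> x] P_spectrum by simp
  qed
  ultimately have "\<exists>x\<in>{a..b}. W_attained A x"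
    using l(2) L(2) \<open>a < b\<close> by (auto simp: zero_less_mult_iff)
  then show ?thesis using that by (auto simp: a_def b_def)
qed

lemma extreme_eigenvalues:
  fixes A :: "real^'n::finite^'n"
  assumes sym: "transpose A = A" and diag: "\<And>i. A $ i $ i = 0" and "A \<noteq> 0"
  shows "lambda_min A \<in> mat_spectrum A" "lambda_min A < 0"
    and "lambda_max A \<in> mat_spectrum A" "0 < lambda_max A"
    and "\<And>\<mu>. \<mu> \<in> mat_spectrum A \<Longrightarrow> lambda_min A \<le> \<mu> \<and> \<mu> \<le> lambda_max A"
proof -
  obtain \<mu> \<nu> where "\<mu> \<in> mat_spectrum A" "\<mu> < 0" "\<nu> \<in> mat_spectrum A" "0 < \<nu>"
    using mat_spectrum_neg_pos[OF sym diag \<open>A \<noteq> 0\<close>] .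
  moreover note fin = finite_mat_spectrum[OF sym]
  ultimately show "lambda_min A \<in> mat_spectrum A" "lambda_max A \<in> mat_spectrum A"
    and bounds: "\<And>\<mu>. \<mu> \<in> mat_spectrum A \<Longrightarrow> lambda_min A \<le> \<mu> \<and> \<mu> \<le> lambda_max A"
    unfolding lambda_min_def lambda_max_def by (auto intro: Min_in Max_in)
  show "lambda_min A < 0" "0 < lambda_max A"
    using bounds \<open>\<mu> \<in> _\<close> \<open>\<mu> < 0\<close> \<open>\<nu> \<in> _\<close> \<open>0 < \<nu>\<close> by force+
qed

lemma Sup_norm_S_set:
  "Sup {ereal ((norm v)\<^sup>2) | v. v \<in> (S_set :: (real^'n::finite) set)} = ereal (real CARD('n))"
proof (rule antisym)
  have norm_one: "(norm (1::real^'n))\<^sup>2 = real CARD('n)"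
    by (simp add: power2_norm_eq_inner inner_vec_def)
  show "Sup {ereal ((norm v)\<^sup>2) | v. v \<in> (S_set :: (real^'n) set)} \<le> ereal (real CARD('n))"
  proof (rule Sup_least, clarify)
    fix v :: "real^'n" assume "v \<in> S_set"
    then have "(norm v)\<^sup>2 \<le> norm (1::real^'n) * norm v"
      using norm_cauchy_schwarz[of 1 v] by (simp add: S_set_iff power2_norm_eq_inner)
    then have "norm v \<le> norm (1::real^'n)"
      by (cases "norm v = 0") (auto simp: power2_eq_square)
    then show "ereal ((norm v)\<^sup>2) \<le> ereal (real CARD('n))"
      by (simp add: power_mono flip: norm_one)
  qed
  show "ereal (real CARD('n)) \<le> Sup {ereal ((norm v)\<^sup>2) | v. v \<in> (S_set :: (real^'n) set)}"
  proof (rule Sup_upper, intro CollectI exI conjI)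
    show "ereal (real CARD('n)) = ereal ((norm (1::real^'n))\<^sup>2)" by (simp add: norm_one)
  qed (simp add: S_set_iff)
qed

lemma Sup_isotropic_S_set_eq_W_min:
  fixes A :: "real^'n::finite^'n"
  assumes "weighted_adj E A"
  shows "Sup {ereal ((norm v)\<^sup>2) | v. v \<in> S_set \<and> v \<bullet> (A *v v) = 0} = W_min A"
proof (cases "A = 0")
  case True
  then show ?thesis by (simp add: W_min_def Sup_norm_S_set)
next
  case False
  have sym: "transpose A = A" and diag: "\<And>i. A $ i $ i = 0"
    using assms by (auto simp: weighted_adj_def)
  let ?I = "{inverse (lambda_min A)..inverse (lambda_max A)}"
  note extreme = extreme_eigenvalues[OF sym diag False]
  have W_min: "W_min A = (INF x\<in>?I. W_fun A x)" using False by (simp add: W_min_def)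
  show ?thesis
  proof (rule antisym)
    show "Sup {ereal ((norm v)\<^sup>2) | v. v \<in> S_set \<and> v \<bullet> (A *v v) = 0} \<le> W_min A"
      unfolding W_min
    proof (rule Sup_least, clarify, rule INF_greatest)
      fix v x assume v: "v \<in> S_set" "v \<bullet> (A *v v) = 0" and "x \<in> ?I"
      then have "\<forall>\<mu>\<in>mat_spectrum A. 0 \<le> 1 - \<mu> * x"
        using extreme one_minus_mult_nonneg by (meson atLeastAtMost_iff)
      with v show "ereal ((norm v)\<^sup>2) \<le> W_fun A x"
        using norm_le_W_fun[OF sym] by (simp add: S_set_iff power2_norm_eq_inner)
    qed
    obtain x where "x \<in> ?I" "W_attained A x"
      using W_attained_in_interval[OF sym extreme(1,2,3,4,5)] .
    then obtain u where "u \<in> S_set" "u \<bullet> (A *v u) = 0" "W_min A \<le> ereal ((norm u)\<^sup>2)"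
      unfolding W_min W_attained_def by (metis INF_lower)
    then show "W_min A \<le> Sup {ereal ((norm v)\<^sup>2) | v. v \<in> S_set \<and> v \<bullet> (A *v v) = 0}"
      by (force intro: Sup_upper2)
  qed
qed

theorem lemma2:
  fixes E :: "'n::finite \<Rightarrow> 'n \<Rightarrow> bool"
  assumes "simple_graph E"
  shows "alpha_S E = (INF A\<in>{A. weighted_adj E A}. W_min A)"
  unfolding alpha_S_def using Sup_isotropic_S_set_eq_W_min by (intro INF_cong) auto

end
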